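(* For $0<q<1$, \[ \sum_{k=0}^\infty\frac{q^k}{(1-q^{k+\frac12})^2}=\sum_{n=0}^\infty\frac{(1-2q^{2n+\frac32}+q^{n+1})\,q^{n^2+n}}{(1-q^{2n+1})(1+q^{n+1})}\cdot\frac{(q;q)_n^4}{(q^{\frac12};q)_{n+1}^2\,(q;q)_{2n}}. \]
   Context: $(x;q)_n=\prod_{i=0}^{n-1}(1-xq^i)$ is the $q$-shifted factorial. *)

theory Defs
  imports Complex_Main
begin

definition qpoch :: "real \<Rightarrow> real \<Rightarrow> nat \<Rightarrow> real" where
  "qpoch x q n = (\<Prod>i<n. 1 - x * q ^ i)"

end

theory Submission
  imports Defs
begin

text \<open>
  Replace \<open>sqrt q\<close> by a parameter \<open>z \<in> [0, 1)\<close>: let \<open>L(z) = \<Sum>k. q^k / (1 - q^k z)^2\<close> and let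
  \<open>R(z) = \<Sum>n. R\<^sub>n(z)\<close> be the right-hand series with \<open>q^(n^2+n)\<close> read as \<open>q^(n^2) z^(2n)\<close> and
  \<open>(sqrt q; q)\<^sub>n\<^sub>+\<^sub>1\<close> as \<open>(z; q)\<^sub>n\<^sub>+\<^sub>1\<close>.
  Both satisfy \<open>F(z) = 1/(1 - z)^2 + q F(q z)\<close>. For \<open>L\<close> this is splitting off the term \<open>k = 0\<close>.
  For \<open>R\<close> it is a telescoping sum: with
  \<open>H\<^sub>n(z) = q^(n^2) z^(2n) (q;q)\<^sub>n^4 / ((q;q)\<^sub>2\<^sub>n (z;q)\<^sub>n\<^sub>+\<^sub>1^2)\<close> one has the rational identity
  \<open>R\<^sub>n(z) - q R\<^sub>n(q z) = H\<^sub>n(z) - H\<^sub>n\<^sub>+\<^sub>1(z)\<close>, and \<open>H\<^sub>0(z) = 1/(1 - z)^2\<close>, \<open>H\<^sub>n(z) \<longrightarrow> 0\<close>.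
  The difference \<open>E = L - R\<close> is bounded on \<open>[0, z]\<close> (all terms are dominated by
  \<open>q^(n^2) C^n\<close>) and satisfies \<open>E(z) = q^k E(q^k z)\<close> for all \<open>k\<close>, so it vanishes.
\<close>

lemma qpoch_0 [simp]: "qpoch z q 0 = 1"
  by (simp add: qpoch_def)

lemma qpoch_Suc: "qpoch z q (Suc n) = qpoch z q n * (1 - z * q ^ n)"
  by (simp add: qpoch_def)

lemma qpoch_scale: "qpoch (q * z) q n * (1 - z) = qpoch z q n * (1 - z * q ^ n)"
proof (induction n)
  case 0
  then show ?case by simp
next
  case (Suc n)
  have "qpoch (q * z) q (Suc n) * (1 - z) = qpoch (q * z) q n * (1 - z) * (1 - z * q ^ Suc n)"
    by (simp add: qpoch_Suc mult_ac)
  also have "\<dots> = qpoch z q (Suc n) * (1 - z * q ^ Suc n)"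
    using Suc by (simp add: qpoch_Suc)
  finally show ?case .
qed

lemma mult_less_1_if_unit_factor:
  fixes z t :: real
  assumes "0 \<le> t" "t \<le> 1" "z < 1"
  shows "z * t < 1"
proof (cases "0 \<le> z")
  case True
  then show ?thesis using assms mult_left_le[of t z] by linarith
next
  case False
  then show ?thesis using assms mult_nonpos_nonneg[of z t] by linarith
qed

lemma qpoch_pos:
  assumes "0 \<le> q" "q \<le> 1" "z < 1"
  shows "0 < qpoch z q n"
  unfolding qpoch_def
proof (rule prod_pos)
  fix i
  have "z * q ^ i < 1"
    using assms by (intro mult_less_1_if_unit_factor) (simp_all add: power_le_one)
  then show "0 < 1 - z * q ^ i" by simp
qed

lemma qpoch_le_1:
  assumes "0 \<le> q" "q \<le> 1" "0 \<le> z" "z \<le> 1"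
  shows "qpoch z q n \<le> 1"
  unfolding qpoch_def
proof (rule prod_le_1)
  fix i
  have "0 \<le> z * q ^ i" "z * q ^ i \<le> 1"
    using assms by (simp_all add: mult_le_one power_le_one)
  then show "0 \<le> 1 - z * q ^ i \<and> 1 - z * q ^ i \<le> 1" by simp
qed

lemma power_le_qpoch:
  assumes "0 \<le> q" "q \<le> 1" "0 \<le> z" "z \<le> x" "x \<le> 1"
  shows "(1 - x) ^ n \<le> qpoch z q n"
proof -
  have "(\<Prod>i<n. 1 - x) \<le> (\<Prod>i<n. 1 - z * q ^ i)"
  proof (rule prod_mono)
    fix i
    have "z * q ^ i \<le> z"
      using assms by (simp add: mult_left_le power_le_one)
    then show "0 \<le> 1 - x \<and> 1 - x \<le> 1 - z * q ^ i"
      using assms by simp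
  qed
  then show ?thesis by (simp add: qpoch_def)
qed

definition tele_term :: "real \<Rightarrow> real \<Rightarrow> nat \<Rightarrow> real" where
  "tele_term q z n = q ^ n\<^sup>2 * z ^ (2*n) * qpoch q q n ^ 4 / (qpoch q q (2*n) * (qpoch z q (n+1))\<^sup>2)"

definition rhs_term :: "real \<Rightarrow> real \<Rightarrow> nat \<Rightarrow> real" where
  "rhs_term q z n = (1 - 2 * q ^ (2*n+1) * z + q ^ (n+1)) / ((1 - q ^ (2*n+1)) * (1 + q ^ (n+1)))
     * tele_term q z n"

lemma tele_term_0: "tele_term q z 0 = 1 / (1 - z)\<^sup>2"
  by (simp add: tele_term_def qpoch_Suc)

lemma tele_term_Suc:
  "tele_term q z (Suc n) = tele_term q z n * (q ^ (2*n+1) * z\<^sup>2 * (1 - q ^ (n+1)) ^ 4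
     / ((1 - q ^ (2*n+1)) * (1 - q ^ (2*n+2)) * (1 - z * q ^ (n+1))\<^sup>2))"
proof -
  have "(Suc n)\<^sup>2 = n\<^sup>2 + (2*n+1)"
    by (simp add: power2_eq_square)
  then have "q ^ (Suc n)\<^sup>2 = q ^ n\<^sup>2 * q ^ (2*n+1)"
    by (simp only: power_add)
  moreover have "z ^ (2 * Suc n) = z ^ (2*n) * z\<^sup>2"
    by (simp add: power_add[symmetric])
  moreover have "qpoch q q (2 * Suc n) = qpoch q q (2*n) * (1 - q ^ (2*n+1)) * (1 - q ^ (2*n+2))"
    by (simp add: qpoch_Suc)
  moreover have "qpoch q q (Suc n) = qpoch q q n * (1 - q ^ (n+1))"
    "qpoch z q (Suc n + 1) = qpoch z q (n+1) * (1 - z * q ^ (n+1))"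
    by (simp_all add: qpoch_Suc)
  ultimately show ?thesis
    unfolding tele_term_def by (simp only:) (simp add: power_mult_distrib mult_ac)
qed

lemma tele_term_scale:
  assumes "z \<noteq> 1"
  shows "tele_term q (q * z) n = tele_term q z n * (q ^ (2*n) * (1 - z)\<^sup>2 / (1 - z * q ^ (n+1))\<^sup>2)"
proof -
  have "qpoch (q * z) q (n+1) = qpoch z q (n+1) * (1 - z * q ^ (n+1)) / (1 - z)"
    using qpoch_scale[of q z "n+1"] assms by (simp add: field_simps)
  then show ?thesis
    by (simp add: tele_term_def power_mult_distrib power_divide mult_ac)
qed

lemma rhs_term_telescopes:
  assumes "0 \<le> q" "q < 1" "z < 1"
  shows "rhs_term q z n - q * rhs_term q (q * z) n = tele_term q z n - tele_term q z (Suc n)"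
proof -
  define p where "p = q ^ n"
  define a where "a = 1 - q * p\<^sup>2"
  define b where "b = 1 + q * p"
  define c where "c = 1 - q * p"
  define w where "w = 1 - z * (q * p)"
  define T where "T = tele_term q z n"
  have pows: "q ^ n = p" "q ^ (2*n) = p\<^sup>2"
    by (simp_all add: p_def power_mult mult.commute[of 2])
  have "q ^ (2*n+1) < 1" "0 \<le> q ^ (n+1)" "q ^ (n+1) < 1"
    using assms by (simp_all add: power_less_one_iff del: power_Suc)
  then have qp: "q * p\<^sup>2 < 1" "0 \<le> q * p" "q * p < 1"
    by (simp_all add: pows)
  moreover have "z * (q * p) < 1"
    using qp assms by (intro mult_less_1_if_unit_factor) simp_all
  ultimately have "0 < a" "0 < b" "0 < c" "0 < w"
    unfolding a_def b_def c_def w_def using qp assms by linarith+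
  then have nz: "a \<noteq> 0" "b \<noteq> 0" "c \<noteq> 0" "w \<noteq> 0"
    by simp_all
  have "rhs_term q z n - q * rhs_term q (q * z) n
      = (1 - 2 * q * p\<^sup>2 * z + q * p) / (a * b) * T
        - q * ((1 - 2 * q * p\<^sup>2 * (q * z) + q * p) / (a * b) * (T * (p\<^sup>2 * (1 - z)\<^sup>2 / w\<^sup>2)))"
    using assms by (simp add: rhs_term_def tele_term_scale T_def a_def b_def w_def pows mult.assoc)
  also have "\<dots> = T * ((1 - 2 * q * p\<^sup>2 * z + q * p) * w\<^sup>2
      - q * p\<^sup>2 * (1 - z)\<^sup>2 * (1 - 2 * q * p\<^sup>2 * (q * z) + q * p)) / (a * b * w\<^sup>2)"
    using nz by (simp add: field_simps)
  also have "(1 - 2 * q * p\<^sup>2 * z + q * p) * w\<^sup>2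
      - q * p\<^sup>2 * (1 - z)\<^sup>2 * (1 - 2 * q * p\<^sup>2 * (q * z) + q * p)
      = a * b * w\<^sup>2 - q * p\<^sup>2 * z\<^sup>2 * c ^ 3"
    unfolding a_def b_def c_def w_def by algebra
  also have "T * (a * b * w\<^sup>2 - q * p\<^sup>2 * z\<^sup>2 * c ^ 3) / (a * b * w\<^sup>2)
      = T - T * (q * p\<^sup>2 * z\<^sup>2 * c ^ 4 / (a * (c * b) * w\<^sup>2))"
    using nz by (simp add: field_simps eval_nat_numeral)
  also have "\<dots> = tele_term q z n - tele_term q z (Suc n)"
  proof -
    have "q ^ (2*n+1) = q * p\<^sup>2" "q ^ (n+1) = q * p" "1 - q ^ (2*n+2) = c * b"
      by (simp_all add: pows[symmetric] c_def b_def power_mult algebra_simps power2_eq_square)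
    then show ?thesis
      by (simp only: tele_term_Suc T_def a_def[symmetric] c_def[symmetric] w_def[symmetric])
  qed
  finally show ?thesis .
qed

lemma summable_power_square_mult_power:
  fixes q c :: real
  assumes "\<bar>q\<bar> < 1"
  shows "summable (\<lambda>n. q ^ n\<^sup>2 * c ^ n)"
proof -
  have "(\<lambda>n. \<bar>q\<bar> ^ n * \<bar>c\<bar>) \<longlonglongrightarrow> 0 * \<bar>c\<bar>"
    by (intro tendsto_mult LIMSEQ_realpow_zero tendsto_const) (use assms in auto)
  then have "\<forall>\<^sub>F n in sequentially. \<bar>q\<bar> ^ n * \<bar>c\<bar> < 1/2"
    by (intro order_tendstoD) auto
  then obtain N where N: "\<And>n. n \<ge> N \<Longrightarrow> \<bar>q\<bar> ^ n * \<bar>c\<bar> < 1/2"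
    by (auto simp: eventually_sequentially)
  show ?thesis
  proof (rule summable_comparison_test')
    show "summable (\<lambda>n. (1/2::real) ^ n)"
      by (rule summable_geometric) simp
    fix n assume "N \<le> n"
    have "norm (q ^ n\<^sup>2 * c ^ n) = (\<bar>q\<bar> ^ n * \<bar>c\<bar>) ^ n"
      by (simp add: power2_eq_square power_mult power_mult_distrib abs_mult power_abs)
    also have "\<dots> \<le> (1/2) ^ n"
      using N[OF \<open>N \<le> n\<close>] by (intro power_mono) auto
    finally show "norm (q ^ n\<^sup>2 * c ^ n) \<le> (1/2) ^ n" .
  qed
qed

definition tele_term_majorant :: "real \<Rightarrow> real \<Rightarrow> nat \<Rightarrow> real" where
  "tele_term_majorant q x n = q ^ n\<^sup>2 * (1 / ((1 - q) * (1 - x))\<^sup>2) ^ n / (1 - x)\<^sup>2"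

lemma tele_term_bounds:
  assumes "0 \<le> q" "q < 1" "0 \<le> z" "z \<le> x" "x < 1"
  shows "0 \<le> tele_term q z n"
    and "tele_term q z n \<le> tele_term_majorant q x n"
proof -
  define a where "a = qpoch z q (n+1)"
  define b where "b = qpoch q q n"
  define c where "c = qpoch q q (2*n)"
  have tele_eq: "tele_term q z n = q ^ n\<^sup>2 * z ^ (2*n) * b ^ 4 / (c * a\<^sup>2)"
    by (simp add: tele_term_def a_def b_def c_def)
  have "0 < b" "b \<le> 1" "0 < c" "(1 - q) ^ (2*n) \<le> c"
    using assms qpoch_pos[of q q] qpoch_le_1[of q q] power_le_qpoch[of q q q]
    by (simp_all add: b_def c_def)
  moreover have "(1 - x) ^ (n+1) \<le> a"
    unfolding a_def by (rule power_le_qpoch) (use assms in auto)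
  moreover have "0 \<le> z ^ (2*n)" "z ^ (2*n) \<le> 1"
    using assms by (simp_all add: power_le_one)
  moreover have "0 < 1 - q" "0 < 1 - x"
    using assms by simp_all
  ultimately have "z ^ (2*n) * b ^ 4 \<le> 1"
    and den: "0 < (1 - q) ^ (2*n) * ((1 - x) ^ (n+1))\<^sup>2"
      "(1 - q) ^ (2*n) * ((1 - x) ^ (n+1))\<^sup>2 \<le> c * a\<^sup>2"
    by (auto intro!: mult_le_one mult_mono power_mono power_le_one simp del: power_Suc)
  then have num: "0 \<le> q ^ n\<^sup>2 * z ^ (2*n) * b ^ 4" "q ^ n\<^sup>2 * z ^ (2*n) * b ^ 4 \<le> q ^ n\<^sup>2"
    using assms by (simp_all add: mult_left_le mult.assoc)
  show "0 \<le> tele_term q z n"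
    unfolding tele_eq using num den by simp
  have "tele_term q z n \<le> q ^ n\<^sup>2 / ((1 - q) ^ (2*n) * ((1 - x) ^ (n+1))\<^sup>2)"
    unfolding tele_eq using num den by (intro frac_le) auto
  also have "\<dots> = tele_term_majorant q x n"
    by (simp add: tele_term_majorant_def power_mult_distrib power_divide power_mult[symmetric]
        power_add mult_ac)
  finally show "tele_term q z n \<le> tele_term_majorant q x n" .
qed

lemma abs_rhs_term_le:
  assumes "0 \<le> q" "q < 1" "0 \<le> z" "z \<le> 1" "0 \<le> tele_term q z n"
  shows "\<bar>rhs_term q z n\<bar> \<le> 2 / (1 - q) * tele_term q z n"
proof -
  have "q ^ (2*n+1) \<le> q"
    using assms by (simp add: mult_left_le power_le_one)
  moreover have "0 \<le> q ^ (n+1)" "q ^ (n+1) \<le> 1" "0 \<le> q ^ (2*n+1) * z" "q ^ (2*n+1) * z \<le> 1"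
    using assms by (auto simp: power_le_one mult_le_one simp del: power_Suc)
  ultimately have num: "\<bar>1 - 2 * q ^ (2*n+1) * z + q ^ (n+1)\<bar> \<le> 2"
    and den: "(1 - q) * 1 \<le> (1 - q ^ (2*n+1)) * (1 + q ^ (n+1))"
    using assms by (auto simp only: abs_le_iff intro!: mult_mono)
  have "\<bar>(1 - 2 * q ^ (2*n+1) * z + q ^ (n+1)) / ((1 - q ^ (2*n+1)) * (1 + q ^ (n+1)))\<bar>
      \<le> 2 / (1 - q)"
    using num den assms by (auto simp: abs_divide intro!: frac_le)
  from mult_right_mono[OF this assms(5)] show ?thesis
    unfolding rhs_term_def abs_mult using assms(5) by simp
qed

lemma summable_tele_term_majorant:
  assumes "0 \<le> q" "q < 1"
  shows "summable (tele_term_majorant q x)"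
  unfolding tele_term_majorant_def
  by (intro summable_divide summable_power_square_mult_power) (use assms in simp)

lemma summable_tele_term:
  assumes "0 \<le> q" "q < 1" "0 \<le> z" "z < 1"
  shows "summable (tele_term q z)"
proof (rule summable_comparison_test'[OF summable_tele_term_majorant[OF assms(1,2), of z]])
  show "norm (tele_term q z n) \<le> tele_term_majorant q z n" for n
    using tele_term_bounds[of q z z n] assms by simp
qed

lemma rhs_term_dominated:
  assumes "0 \<le> q" "q < 1" "x < 1"
  obtains M where "summable M" and "\<And>z n. z \<in> {0..x} \<Longrightarrow> \<bar>rhs_term q z n\<bar> \<le> M n"
proof
  show "summable (\<lambda>n. 2 / (1 - q) * tele_term_majorant q x n)"
    using summable_tele_term_majorant[OF assms(1,2)] by (rule summable_mult)
  fix z n assume "z \<in> {0..x}"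
  then have "0 \<le> tele_term q z n"
    and bound: "tele_term q z n \<le> tele_term_majorant q x n"
    using tele_term_bounds[of q z x n] assms by auto
  then have "\<bar>rhs_term q z n\<bar> \<le> 2 / (1 - q) * tele_term q z n"
    using abs_rhs_term_le[of q z n] assms \<open>z \<in> {0..x}\<close> by simp
  also have "\<dots> \<le> 2 / (1 - q) * tele_term_majorant q x n"
    using bound assms by (intro mult_left_mono) simp_all
  finally show "\<bar>rhs_term q z n\<bar> \<le> 2 / (1 - q) * tele_term_majorant q x n" .
qed

definition rhs_sum :: "real \<Rightarrow> real \<Rightarrow> real" where
  "rhs_sum q z = (\<Sum>n. rhs_term q z n)"

lemma summable_rhs_term:
  assumes "0 \<le> q" "q < 1" "0 \<le> z" "z < 1"
  shows "summable (rhs_term q z)"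
proof -
  obtain M where M: "summable M" "\<And>w n. w \<in> {0..z} \<Longrightarrow> \<bar>rhs_term q w n\<bar> \<le> M n"
    using rhs_term_dominated[OF assms(1,2,4)] by metis
  show ?thesis
  proof (rule summable_comparison_test'[OF M(1)])
    show "norm (rhs_term q z n) \<le> M n" for n
      using M(2)[of z n] assms(3) by simp
  qed
qed

lemma rhs_sum_bounded:
  assumes "0 \<le> q" "q < 1" "x < 1"
  shows "\<exists>B. \<forall>z\<in>{0..x}. \<bar>rhs_sum q z\<bar> \<le> B"
proof -
  obtain M where "summable M" "\<And>z n. z \<in> {0..x} \<Longrightarrow> \<bar>rhs_term q z n\<bar> \<le> M n"
    using rhs_term_dominated[OF assms] by metis
  then have "\<bar>rhs_sum q z\<bar> \<le> suminf M" if "z \<in> {0..x}" for z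
    unfolding rhs_sum_def using norm_suminf_le[of "rhs_term q z" M] that by simp
  then show ?thesis by blast
qed

lemma rhs_sum_functional_eq:
  assumes "0 \<le> q" "q < 1" "0 \<le> z" "z < 1"
  shows "rhs_sum q z = 1 / (1 - z)\<^sup>2 + q * rhs_sum q (q * z)"
proof -
  have "0 \<le> q * z" "q * z < 1"
    using assms mult_left_le_one_le[of z q] by simp_all
  then have "(\<lambda>n. q * rhs_term q (q * z) n) sums (q * rhs_sum q (q * z))"
    unfolding rhs_sum_def using assms by (intro sums_mult summable_sums summable_rhs_term)
  moreover have "(\<lambda>n. tele_term q z n - tele_term q z (Suc n)) sums (tele_term q z 0 - 0)"
    using assms by (intro telescope_sums' summable_LIMSEQ_zero summable_tele_term)
  ultimately have "(\<lambda>n. q * rhs_term q (q * z) n + (tele_term q z n - tele_term q z (Suc n)))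
      sums (q * rhs_sum q (q * z) + (tele_term q z 0 - 0))"
    by (rule sums_add)
  moreover have "q * rhs_term q (q * z) n + (tele_term q z n - tele_term q z (Suc n)) = rhs_term q z n" for n
    using rhs_term_telescopes[of q z n] assms by simp
  ultimately have "rhs_term q z sums (q * rhs_sum q (q * z) + 1 / (1 - z)\<^sup>2)"
    by (simp add: tele_term_0)
  then show ?thesis
    unfolding rhs_sum_def by (simp add: sums_iff)
qed

definition lhs_sum :: "real \<Rightarrow> real \<Rightarrow> real" where
  "lhs_sum q z = (\<Sum>k. q ^ k / (1 - q ^ k * z)\<^sup>2)"

lemma lhs_term_bounds:
  fixes q z x :: real
  assumes "0 \<le> q" "q \<le> 1" "0 \<le> z" "z \<le> x" "x < 1"
  shows "0 \<le> q ^ k / (1 - q ^ k * z)\<^sup>2" and "q ^ k / (1 - q ^ k * z)\<^sup>2 \<le> q ^ k / (1 - x)\<^sup>2"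
proof -
  have "q ^ k * z \<le> z"
    using assms by (intro mult_left_le_one_le) (simp_all add: power_le_one)
  then have "0 < 1 - x" "1 - x \<le> 1 - q ^ k * z"
    using assms by simp_all
  then show "q ^ k / (1 - q ^ k * z)\<^sup>2 \<le> q ^ k / (1 - x)\<^sup>2"
    using assms by (intro divide_left_mono power_mono mult_pos_pos) auto
  show "0 \<le> q ^ k / (1 - q ^ k * z)\<^sup>2"
    using assms by simp
qed

lemma summable_lhs_term:
  fixes q z :: real
  assumes "0 \<le> q" "q < 1" "0 \<le> z" "z < 1"
  shows "summable (\<lambda>k. q ^ k / (1 - q ^ k * z)\<^sup>2)"
proof (rule summable_comparison_test')
  show "summable (\<lambda>k. q ^ k / (1 - z)\<^sup>2)"
    using assms by (intro summable_divide summable_geometric) simp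
  show "norm (q ^ k / (1 - q ^ k * z)\<^sup>2) \<le> q ^ k / (1 - z)\<^sup>2" for k
    using lhs_term_bounds[of q z z k] assms by simp
qed

lemma lhs_sum_bounded:
  assumes "0 \<le> q" "q < 1" "x < 1"
  shows "\<exists>B. \<forall>z\<in>{0..x}. \<bar>lhs_sum q z\<bar> \<le> B"
proof -
  have "summable (\<lambda>k. q ^ k / (1 - x)\<^sup>2)"
    using assms by (intro summable_divide summable_geometric) simp
  then have "\<bar>lhs_sum q z\<bar> \<le> (\<Sum>k. q ^ k / (1 - x)\<^sup>2)" if "z \<in> {0..x}" for z
    unfolding lhs_sum_def using that assms lhs_term_bounds[of q z x]
      norm_suminf_le[of "\<lambda>k. q ^ k / (1 - q ^ k * z)\<^sup>2" "\<lambda>k. q ^ k / (1 - x)\<^sup>2"]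
    by simp
  then show ?thesis by blast
qed

lemma lhs_sum_functional_eq:
  assumes "0 \<le> q" "q < 1" "0 \<le> z" "z < 1"
  shows "lhs_sum q z = 1 / (1 - z)\<^sup>2 + q * lhs_sum q (q * z)"
proof -
  have "0 \<le> q * z" "q * z < 1"
    using assms mult_left_le_one_le[of z q] by simp_all
  then have "(\<lambda>k. q * (q ^ k / (1 - q ^ k * (q * z))\<^sup>2)) sums (q * lhs_sum q (q * z))"
    unfolding lhs_sum_def using assms by (intro sums_mult summable_sums summable_lhs_term)
  then have "(\<lambda>k. q ^ Suc k / (1 - q ^ Suc k * z)\<^sup>2) sums (q * lhs_sum q (q * z))"
    by (simp add: mult_ac)
  then have "(\<lambda>k. q ^ k / (1 - q ^ k * z)\<^sup>2) sums (q * lhs_sum q (q * z) + q ^ 0 / (1 - q ^ 0 * z)\<^sup>2)"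
    by (rule sums_Suc_iff[THEN iffD1])
  then show ?thesis
    unfolding lhs_sum_def by (simp add: sums_iff)
qed

lemma bounded_q_scaling_solution_eq_0:
  fixes E :: "real \<Rightarrow> real"
  assumes "\<bar>q\<bar> < 1"
    and closed: "\<And>w. w \<in> A \<Longrightarrow> q * w \<in> A"
    and scaling: "\<And>w. w \<in> A \<Longrightarrow> E w = q * E (q * w)"
    and bounded: "\<And>w. w \<in> A \<Longrightarrow> \<bar>E w\<bar> \<le> B"
    and "z \<in> A"
  shows "E z = 0"
proof -
  have iter: "q ^ k * z \<in> A \<and> E z = q ^ k * E (q ^ k * z)" for k
  proof (induction k)
    case 0
    then show ?case using \<open>z \<in> A\<close> by simp
  next
    case (Suc k)
    then show ?case
      using closed[of "q ^ k * z"] scaling[of "q ^ k * z"] by (simp add: mult_ac)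
  qed
  have "\<bar>E z\<bar> \<le> \<bar>q\<bar> ^ k * B" for k
    using iter[of k] bounded[of "q ^ k * z"] mult_left_mono[of _ B "\<bar>q\<bar> ^ k"]
    by (auto simp: abs_mult power_abs)
  moreover have "(\<lambda>k. \<bar>q\<bar> ^ k * B) \<longlonglongrightarrow> 0 * B"
    by (intro tendsto_mult LIMSEQ_realpow_zero tendsto_const) (use assms in auto)
  ultimately have "\<bar>E z\<bar> \<le> 0 * B"
    by (intro LIMSEQ_le[OF tendsto_const]) auto
  then show ?thesis by simp
qed

lemma lhs_sum_eq_rhs_sum:
  assumes "0 \<le> q" "q < 1" "0 \<le> z" "z < 1"
  shows "lhs_sum q z = rhs_sum q z"
proof -
  obtain B1 where B1: "\<forall>w\<in>{0..z}. \<bar>lhs_sum q w\<bar> \<le> B1"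
    using lhs_sum_bounded[OF assms(1,2,4)] by blast
  obtain B2 where B2: "\<forall>w\<in>{0..z}. \<bar>rhs_sum q w\<bar> \<le> B2"
    using rhs_sum_bounded[OF assms(1,2,4)] by blast
  show ?thesis
  proof (rule eq_iff_diff_eq_0[THEN iffD2],
      rule bounded_q_scaling_solution_eq_0[where E = "\<lambda>w. lhs_sum q w - rhs_sum q w"
        and A = "{0..z}" and B = "B1 + B2"])
    show "\<bar>q\<bar> < 1" "z \<in> {0..z}"
      using assms by simp_all
    fix w assume w: "w \<in> {0..z}"
    then show "q * w \<in> {0..z}"
      using assms mult_left_le_one_le[of w q] by simp
    show "lhs_sum q w - rhs_sum q w = q * (lhs_sum q (q * w) - rhs_sum q (q * w))"
      using w assms lhs_sum_functional_eq[of q w] rhs_sum_functional_eq[of q w]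
      by (simp add: algebra_simps)
    show "\<bar>lhs_sum q w - rhs_sum q w\<bar> \<le> B1 + B2"
      using w B1 B2 by (smt (verit))
  qed
qed

theorem mainTheorem20:
  fixes q :: real
  assumes "0 < q" and "q < 1"
  shows "summable (\<lambda>k. q ^ k / (1 - q ^ k * sqrt q)\<^sup>2) \<and>
    (\<lambda>n. (1 - 2 * q ^ (2*n+1) * sqrt q + q ^ (n+1)) * q ^ (n^2+n)
          / ((1 - q ^ (2*n+1)) * (1 + q ^ (n+1)))
          * (qpoch q q n ^ 4 / ((qpoch (sqrt q) q (n+1))\<^sup>2 * qpoch q q (2*n))))
      sums (\<Sum>k. q ^ k / (1 - q ^ k * sqrt q)\<^sup>2)"
proof -
  have q: "0 \<le> q" "q < 1" and z: "0 \<le> sqrt q" "sqrt q < 1"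
    using assms by simp_all
  have rhs_term_sqrt: "rhs_term q (sqrt q) = (\<lambda>n. (1 - 2 * q ^ (2*n+1) * sqrt q + q ^ (n+1)) * q ^ (n^2+n)
          / ((1 - q ^ (2*n+1)) * (1 + q ^ (n+1)))
          * (qpoch q q n ^ 4 / ((qpoch (sqrt q) q (n+1))\<^sup>2 * qpoch q q (2*n))))"
    (is "_ = ?term")
  proof
    fix n
    have "sqrt q ^ (2*n) = q ^ n"
      using q by (simp add: power_mult)
    then show "rhs_term q (sqrt q) n = ?term n"
      by (simp add: rhs_term_def tele_term_def power_add mult_ac)
  qed
  have "rhs_term q (sqrt q) sums lhs_sum q (sqrt q)"
    using lhs_sum_eq_rhs_sum[OF q z] summable_rhs_term[OF q z]
    by (simp add: rhs_sum_def summable_sums)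
  with summable_lhs_term[OF q z] show ?thesis
    unfolding rhs_term_sqrt lhs_sum_def by blast
qed

end
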